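(* Let $S^{\max}$, $L$ and $\alpha$ be as in the context. For every $P\in L$ and all $\tau,\tau'\in S^{\mathrm{pf}}$, if $\tau\in\alpha(P)$ and $\tau\preceq\tau'$, then $\tau'\in\alpha(P)$.
   Context: Let $E$ be a set of events. A trace is a finite sequence $\sigma=\sigma_0\cdots\sigma_{n-1}$ ($n\ge 0$) or an infinite sequence $\sigma_0\sigma_1\cdots$ of events; $|\sigma|$ is its length ($\infty$ if infinite) and $\mathbb{T}$ is the set of all traces (including the empty trace). Write $\sigma\preceq\sigma'$ iff $|\sigma|\le|\sigma'|$ and $\sigma_i=\sigma'_i$ for all $0\le i<|\sigma|$ (prefix order). For $P\subseteq\mathbb{T}$, $\mathrm{pf}(P)=\{\sigma'\in\mathbb{T}\mid\exists\sigma\in P.\ \sigma'\preceq\sigma\}$. Fix $S^{\max}\subseteq\mathbb{T}$ and let $S^{\mathrm{pf}}=\mathrm{pf}(S^{\max})$ (valid traces). For $P\subseteq\mathbb{T}$, $\alpha(P)=\{\sigma\in\mathrm{pf}(P)\mid\forall\sigma'\in S^{\max}.\ \sigma\preceq\sigma'\Rightarrow\sigma'\in P\}$. Let $L\subseteq\wp(S^{\max})$ with $S^{\max},\emptyset\in L$ be such that $(L,\subseteq)$ is a complete lattice. *)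

theory Defs
  imports Main "HOL-Library.Extended_Nat"
begin

text \<open>A trace over events 'e is represented as a map nat => 'e option whose
 domain is downward closed: position i holds Some event iff i < length.
 This covers finite traces (including the empty one) and infinite traces.\<close>

definition is_trace :: "(nat \<Rightarrow> 'e option) \<Rightarrow> bool" where
  "is_trace s \<longleftrightarrow> (\<forall>i. s i = None \<longrightarrow> s (Suc i) = None)"

definition traces :: "(nat \<Rightarrow> 'e option) set" where
  "traces = {s. is_trace s}"

definition prefix_tr :: "(nat \<Rightarrow> 'e option) \<Rightarrow> (nat \<Rightarrow> 'e option) \<Rightarrow> bool" (infix "\<preceq>\<^sub>t" 50) where
  "s \<preceq>\<^sub>t s' \<longleftrightarrow> (\<forall>i. s i \<noteq> None \<longrightarrow> s' i = s i)"

definition pf :: "(nat \<Rightarrow> 'e option) set \<Rightarrow> (nat \<Rightarrow> 'e option) set" where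
  "pf P = {s' \<in> traces. \<exists>s\<in>P. s' \<preceq>\<^sub>t s}"

definition alpha :: "(nat \<Rightarrow> 'e option) set \<Rightarrow> (nat \<Rightarrow> 'e option) set \<Rightarrow> (nat \<Rightarrow> 'e option) set" where
  "alpha Smax P = {s \<in> pf P. \<forall>s'\<in>Smax. s \<preceq>\<^sub>t s' \<longrightarrow> s' \<in> P}"

definition complete_lattice_subset :: "'a set set \<Rightarrow> bool" where
  "complete_lattice_subset L \<longleftrightarrow>
     (\<forall>M\<subseteq>L. \<exists>u\<in>L. (\<forall>m\<in>M. m \<subseteq> u) \<and> (\<forall>v\<in>L. (\<forall>m\<in>M. m \<subseteq> v) \<longrightarrow> u \<subseteq> v)) \<and>
     (\<forall>M\<subseteq>L. \<exists>l\<in>L. (\<forall>m\<in>M. l \<subseteq> m) \<and> (\<forall>v\<in>L. (\<forall>m\<in>M. v \<subseteq> m) \<longrightarrow> v \<subseteq> l))"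

end

theory Submission
  imports Defs
begin

text \<open>Every maximal extension of \<tau>' is also one of \<tau>, so it lies in P; and \<tau>' has at
 least one maximal extension since it is valid, which makes \<tau>' a prefix of P.\<close>

lemma prefix_tr_trans: "s \<preceq>\<^sub>t t \<Longrightarrow> t \<preceq>\<^sub>t u \<Longrightarrow> s \<preceq>\<^sub>t u"
  unfolding prefix_tr_def by metis

lemma alpha_upward_closed:
  assumes in_alpha: "\<tau> \<in> alpha Smax P"
    and pre: "\<tau> \<preceq>\<^sub>t \<tau>'"
    and valid: "\<tau>' \<in> pf Smax"
  shows "\<tau>' \<in> alpha Smax P"
proof -
  have extensions_in_P: "s \<in> P" if "s \<in> Smax" "\<tau>' \<preceq>\<^sub>t s" for s
    using in_alpha that prefix_tr_trans[OF pre] unfolding alpha_def by blast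
  from valid obtain s where "s \<in> Smax" "\<tau>' \<preceq>\<^sub>t s" and "\<tau>' \<in> traces"
    unfolding pf_def by blast
  then have "\<tau>' \<in> pf P"
    using extensions_in_P unfolding pf_def by blast
  with extensions_in_P show ?thesis
    unfolding alpha_def by blast
qed

theorem lemma5:
  fixes Smax :: "(nat \<Rightarrow> 'e option) set"
    and L :: "(nat \<Rightarrow> 'e option) set set"
  assumes Smax_traces: "Smax \<subseteq> traces"
    and L_sub: "L \<subseteq> Pow Smax"
    and Smax_in: "Smax \<in> L"
    and empty_in: "{} \<in> L"
    and L_cl: "complete_lattice_subset L"
    and P_in: "P \<in> L"
    and tau: "\<tau> \<in> pf Smax"
    and tau': "\<tau>' \<in> pf Smax"
    and in_alpha: "\<tau> \<in> alpha Smax P"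
    and pre: "\<tau> \<preceq>\<^sub>t \<tau>'"
  shows "\<tau>' \<in> alpha Smax P"
  using in_alpha pre tau' by (rule alpha_upward_closed)

end
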